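(* Assume (A1), (A2), (A3) (see context). Suppose there exist a locally bounded measurable $\phi:\mathbb R_+\to\mathbb R_+$ and constants $C_0,\varepsilon>0$ such that $\phi(r)\le C_0r^{-d-2-\varepsilon}$ for $r\ge1$, and for $\mathcal P_0$-a.a. $\omega$, $\mathrm E_0[c_{0,x}(\omega)\mid\hat\omega]\le\phi(|x|)$ for all $x\in\hat\omega$ with $x\sim0$. If $\rho_2<+\infty$, then $\lambda_0,\lambda_2\in L^1(\mathcal P_0)$.
   Context: $\mathcal N$ = locally finite subsets of $\mathbb R^d$, identified with counting measures ($\xi(A)=\#(\xi\cap A)$), with $\sigma$-algebra generated by $\xi\mapsto\xi(A)$; $\tau_x\xi:=\xi-x$. $\mathrm{Vor}(x|\xi)=\{y:|y-x|\le|y-z|\ \forall z\in\xi\}$; $\mathrm{DT}(\xi)$ is the graph on $\xi$ with edges $\{x,y\}$, $x\ne y$, whose Voronoi cells share a $(d-1)$-dimensional face; $x\sim y$ denotes adjacency. Setting: $(\Omega,\mathcal F,\mathcal P)$ probability space with a measurable $\mathbb R^d$-action $(\theta_x)$; simple point process $\omega\mapsto\hat\omega\in\mathcal N$ with law $\mathbb P$ (expectation $\mathbb E$); measurable symmetric conductances $c_{x,y}(\omega)\ge0$ with $c_{x,x}=0$ and $c_{x,y}(\omega)=0$ unless $\{x,y\}$ is an edge of $\mathrm{DT}(\hat\omega)$. (A1) $\mathcal P$ is $\theta$-invariant and $\mathcal P(\hat\omega=\emptyset)=0$; (A2) $m:=\mathbb E[\xi([0,1]^d)]\in(0,\infty)$;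 (A3) on a $\theta$-invariant measurable set $\Omega_*$ of full measure, $\widehat{\theta_x\omega}=\tau_x\hat\omega$ and $c_{y-x,z-x}(\theta_x\omega)=c_{y,z}(\omega)$ for all $x$ and edges $\{y,z\}$ of $\mathrm{DT}(\hat\omega)$. Palm distribution $\mathcal P_0(A)=\frac1m\int d\mathcal P(\omega)\sum_{x\in\hat\omega\cap[0,1]^d}\mathbf 1_A(\theta_x\omega)$, concentrated on $\{0\in\hat\omega\}$, expectation $\mathrm E_0$. $\lambda_k(\omega):=\sum_{x\in\hat\omega:x\sim0}c_{0,x}(\omega)|x|^k$ for $k=0,2$. $\rho_2:=\mathbb E[\xi([0,1]^d)^2]$. *)

theory Defs
  imports "HOL-Probability.Probability"
begin

text \<open>Locally finite subsets of R^d (simple counting measures).\<close>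
definition loc_finite_sets :: "('a::euclidean_space) set set" where
  "loc_finite_sets = {\<xi>. \<forall>K. compact K \<longrightarrow> finite (\<xi> \<inter> K)}"

definition Nspace :: "('a::euclidean_space) set measure" where
  "Nspace = sigma loc_finite_sets
     {{\<xi> \<in> loc_finite_sets. card (\<xi> \<inter> A) = k} | A k. A \<in> sets borel \<and> bounded A}"

definition Vor :: "'a::euclidean_space \<Rightarrow> 'a set \<Rightarrow> 'a set" where
  "Vor x \<xi> = {y. \<forall>z\<in>\<xi>. dist y x \<le> dist y z}"

text \<open>Adjacency in the Delaunay triangulation DT(xi): distinct points of xi
  whose Voronoi cells share a (d-1)-dimensional face.\<close>
definition dt_adj :: "'a::euclidean_space set \<Rightarrow> 'a \<Rightarrow> 'a \<Rightarrow> bool" where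
  "dt_adj \<xi> x y \<longleftrightarrow> x \<in> \<xi> \<and> y \<in> \<xi> \<and> x \<noteq> y \<and>
      aff_dim (Vor x \<xi> \<inter> Vor y \<xi>) = int DIM('a) - 1"

definition measurable_action :: "'w measure \<Rightarrow> ('a::euclidean_space \<Rightarrow> 'w \<Rightarrow> 'w) \<Rightarrow> bool" where
  "measurable_action P \<theta> \<longleftrightarrow>
     (\<lambda>(x, \<omega>). \<theta> x \<omega>) \<in> measurable (borel \<Otimes>\<^sub>M P) P \<and>
     (\<forall>\<omega>\<in>space P. \<theta> 0 \<omega> = \<omega>) \<and>
     (\<forall>x y. \<forall>\<omega>\<in>space P. \<theta> (x + y) \<omega> = \<theta> x (\<theta> y \<omega>))"

definition intensity :: "'w measure \<Rightarrow> ('w \<Rightarrow> 'a::euclidean_space set) \<Rightarrow> ennreal" where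
  "intensity P pp = (\<integral>\<^sup>+ \<omega>. of_nat (card (pp \<omega> \<inter> cbox 0 One)) \<partial>P)"

definition second_moment :: "'w measure \<Rightarrow> ('w \<Rightarrow> 'a::euclidean_space set) \<Rightarrow> ennreal" where
  "second_moment P pp = (\<integral>\<^sup>+ \<omega>. of_nat (card (pp \<omega> \<inter> cbox 0 One)) ^ 2 \<partial>P)"

definition palm :: "'w measure \<Rightarrow> ('a::euclidean_space \<Rightarrow> 'w \<Rightarrow> 'w) \<Rightarrow> ('w \<Rightarrow> 'a set) \<Rightarrow> 'w measure" where
  "palm P \<theta> pp = measure_of (space P) (sets P)
     (\<lambda>A. (\<integral>\<^sup>+ \<omega>. of_nat (card {x \<in> pp \<omega> \<inter> cbox 0 One. \<theta> x \<omega> \<in> A}) \<partial>P) / intensity P pp)"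

definition lam :: "('w \<Rightarrow> 'a::euclidean_space \<Rightarrow> 'a \<Rightarrow> real) \<Rightarrow> ('w \<Rightarrow> 'a set) \<Rightarrow> nat \<Rightarrow> 'w \<Rightarrow> ennreal" where
  "lam c pp k \<omega> = (\<integral>\<^sup>+ x. ennreal (c \<omega> 0 x * norm x ^ k) \<partial>count_space {x \<in> pp \<omega>. dt_adj (pp \<omega>) 0 x})"

text \<open>g(xi, x) is a version of the conditional expectation E_0[c_{0,x} | omega-hat] at the
  neighbours x of 0: g is measurable in (xi, x) and, for every nonnegative measurable test
  function h of (omega-hat, x),
  E_0[sum_{x~0} c_{0,x} h(omega-hat,x)] = E_0[sum_{x~0} g(omega-hat,x) h(omega-hat,x)].\<close>
definition cond_exp_neighbours ::
  "'w measure \<Rightarrow> ('w \<Rightarrow> 'a::euclidean_space set) \<Rightarrow> ('w \<Rightarrow> 'a \<Rightarrow> 'a \<Rightarrow> real)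
     \<Rightarrow> ('a set \<times> 'a \<Rightarrow> ennreal) \<Rightarrow> bool" where
  "cond_exp_neighbours Q pp c g \<longleftrightarrow>
     g \<in> borel_measurable (Nspace \<Otimes>\<^sub>M borel) \<and>
     (\<forall>h \<in> borel_measurable (Nspace \<Otimes>\<^sub>M borel).
        (\<integral>\<^sup>+ \<omega>. (\<integral>\<^sup>+ x. ennreal (c \<omega> 0 x) * h (pp \<omega>, x)
                    \<partial>count_space {x \<in> pp \<omega>. dt_adj (pp \<omega>) 0 x}) \<partial>Q)
      = (\<integral>\<^sup>+ \<omega>. (\<integral>\<^sup>+ x. g (pp \<omega>, x) * h (pp \<omega>, x)
                    \<partial>count_space {x \<in> pp \<omega>. dt_adj (pp \<omega>) 0 x}) \<partial>Q))"

end

theory Submission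
  imports Defs
begin

(* The defining property of g turns E_0[lambda_k] into E_0[sum_{x ~ 0} g(x) |x|^k], which is at
   most E_0[sum_{x in xi} phi(|x|) |x|^k].  The decay of phi dominates phi(r) r^k, k <= 2, by
   sum_j a_j 1{r <= 2^(j+1)} with a_j of order 2^(-(d+eps) j).  By the definition of the Palm
   distribution and stationarity, E_0[xi(B(0,R))] <= E[xi([0,1]^d) xi(B(0,R+d))] / m; covering the
   ball by O(R^d) unit cubes and using ab <= a^2 + b^2 bounds this by O(R^d) rho_2 / m, and the
   weights a_j make the resulting series converge. *)

lemma space_Nspace: "space (Nspace :: 'a::euclidean_space set measure) = loc_finite_sets"
  unfolding Nspace_def by (rule space_measure_of) auto

lemma sets_Nspace: "sets (Nspace :: 'a::euclidean_space set measure) =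
   sigma_sets loc_finite_sets
     {{\<xi> \<in> loc_finite_sets. card (\<xi> \<inter> A) = k} | A k. A \<in> sets borel \<and> bounded A}"
  unfolding Nspace_def by (rule sets_measure_of) auto

lemma finite_Int_bounded_loc_finite:
  assumes "\<xi> \<in> loc_finite_sets" "bounded A"
  shows "finite (\<xi> \<inter> A)"
proof -
  have "finite (\<xi> \<inter> closure A)"
    using assms compact_closure unfolding loc_finite_sets_def by blast
  then show ?thesis
    by (rule finite_subset[rotated]) (use closure_subset in auto)
qed

locale point_process =
  fixes P :: "'w measure" and pp :: "'w \<Rightarrow> 'a::euclidean_space set"
  assumes pp_meas: "pp \<in> measurable P Nspace"
begin

lemma loc_finite_points: "\<omega> \<in> space P \<Longrightarrow> pp \<omega> \<in> loc_finite_sets"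
  using measurable_space[OF pp_meas] by (simp add: space_Nspace)

lemma finite_points_bounded: "\<omega> \<in> space P \<Longrightarrow> bounded A \<Longrightarrow> finite (pp \<omega> \<inter> A)"
  by (rule finite_Int_bounded_loc_finite[OF loc_finite_points])

lemma measurable_card_points:
  assumes "A \<in> sets borel" "bounded A"
  shows "(\<lambda>\<omega>. card (pp \<omega> \<inter> A)) \<in> measurable P (count_space UNIV)"
  unfolding measurable_count_space_eq2_countable
proof (intro conjI ballI)
  fix k :: nat
  have "{\<xi> \<in> loc_finite_sets. card (\<xi> \<inter> A) = k} \<in> sets Nspace"
    unfolding sets_Nspace using assms by (intro sigma_sets.Basic) blast
  from measurable_sets[OF pp_meas this]
  show "(\<lambda>\<omega>. card (pp \<omega> \<inter> A)) -` {k} \<inter> space P \<in> sets P"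
    by (rule back_subst) (use loc_finite_points in auto)
qed auto

lemma borel_measurable_card_points:
  "A \<in> sets borel \<Longrightarrow> bounded A \<Longrightarrow>
    (\<lambda>\<omega>. of_nat (card (pp \<omega> \<inter> A)) :: ennreal) \<in> borel_measurable P"
  by (rule measurable_compose[OF measurable_card_points]) simp_all

text \<open>Dynkin argument over the Int-stable generator of \<open>P \<Otimes>\<^sub>M borel\<close>; the bounded
  window \<open>B\<close> keeps the counts finite, which the complement step needs.\<close>
lemma borel_measurable_count_section_bounded:
  assumes S: "S \<in> sets (P \<Otimes>\<^sub>M borel)" and B: "B \<in> sets borel" "bounded B"
  shows "(\<lambda>\<omega>. emeasure (count_space UNIV) {x \<in> pp \<omega> \<inter> B. (\<omega>, x) \<in> S}) \<in> borel_measurable P"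
  using Int_stable_pair_measure_generator pair_measure_closed S unfolding sets_pair_measure
proof (induct rule: sigma_sets_induct_disjoint)
  case (basic A)
  then obtain a b where ab: "A = a \<times> b" "a \<in> sets P" "b \<in> sets borel" by auto
  have "emeasure (count_space UNIV) {x \<in> pp \<omega> \<inter> B. (\<omega>, x) \<in> A}
      = indicator a \<omega> * of_nat (card (pp \<omega> \<inter> (B \<inter> b)))" if "\<omega> \<in> space P" for \<omega>
  proof -
    have "finite (pp \<omega> \<inter> (B \<inter> b))"
      using finite_points_bounded[OF that] B(2) by (simp add: bounded_Int)
    moreover have "{x \<in> pp \<omega> \<inter> B. (\<omega>, x) \<in> A} = (if \<omega> \<in> a then pp \<omega> \<inter> (B \<inter> b) else {})"
      using ab(1) by auto
    ultimately show ?thesis by simp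
  qed
  moreover have "(\<lambda>\<omega>. indicator a \<omega> * of_nat (card (pp \<omega> \<inter> (B \<inter> b))) :: ennreal)
      \<in> borel_measurable P"
    using ab B
    by (intro borel_measurable_times_ennreal borel_measurable_indicator borel_measurable_card_points)
       (auto simp: bounded_Int)
  ultimately show ?case by (simp cong: measurable_cong)
next
  case empty
  then show ?case by simp
next
  case (compl A)
  have "emeasure (count_space UNIV) {x \<in> pp \<omega> \<inter> B. (\<omega>, x) \<in> space P \<times> space borel - A}
      = of_nat (card (pp \<omega> \<inter> B)) - emeasure (count_space UNIV) {x \<in> pp \<omega> \<inter> B. (\<omega>, x) \<in> A}"
    if "\<omega> \<in> space P" for \<omega>
  proof -
    have fin: "finite (pp \<omega> \<inter> B)" by (rule finite_points_bounded[OF that B(2)])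
    have "{x \<in> pp \<omega> \<inter> B. (\<omega>, x) \<in> space P \<times> space borel - A}
        = pp \<omega> \<inter> B - {x \<in> pp \<omega> \<inter> B. (\<omega>, x) \<in> A}"
      using that by auto
    moreover have "finite {x \<in> pp \<omega> \<inter> B. (\<omega>, x) \<in> A}"
      using fin by (rule finite_subset[rotated]) auto
    ultimately show ?thesis
      using fin by (simp only:) (subst emeasure_Diff; auto)
  qed
  moreover have "(\<lambda>\<omega>. of_nat (card (pp \<omega> \<inter> B))
      - emeasure (count_space UNIV) {x \<in> pp \<omega> \<inter> B. (\<omega>, x) \<in> A}) \<in> borel_measurable P"
    using borel_measurable_card_points[OF B] compl(2) by (rule borel_measurable_minus_ennreal)
  ultimately show ?case by (simp cong: measurable_cong)
next
  case (union A)
  have "emeasure (count_space UNIV) {x \<in> pp \<omega> \<inter> B. (\<omega>, x) \<in> (\<Union>i. A i)}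
      = (\<Sum>i. emeasure (count_space UNIV) {x \<in> pp \<omega> \<inter> B. (\<omega>, x) \<in> A i})" for \<omega>
  proof -
    have "{x \<in> pp \<omega> \<inter> B. (\<omega>, x) \<in> (\<Union>i. A i)} = (\<Union>i. {x \<in> pp \<omega> \<inter> B. (\<omega>, x) \<in> A i})"
      by auto
    with union(1) show ?thesis
      by (simp only:) (subst suminf_emeasure; auto simp: disjoint_family_on_def)
  qed
  then show ?case
    using union(3) by (simp add: borel_measurable_suminf_order)
qed

lemma borel_measurable_count_section:
  assumes S: "S \<in> sets (P \<Otimes>\<^sub>M borel)"
  shows "(\<lambda>\<omega>. emeasure (count_space UNIV) {x \<in> pp \<omega>. (\<omega>, x) \<in> S}) \<in> borel_measurable P"
proof -
  have "emeasure (count_space UNIV) {x \<in> pp \<omega>. (\<omega>, x) \<in> S}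
      = (SUP n. emeasure (count_space UNIV) {x \<in> pp \<omega> \<inter> cball 0 (real n). (\<omega>, x) \<in> S})" for \<omega>
  proof -
    have "{x \<in> pp \<omega>. (\<omega>, x) \<in> S} = (\<Union>n. {x \<in> pp \<omega> \<inter> cball 0 (real n). (\<omega>, x) \<in> S})"
      by (auto simp: real_arch_simple)
    moreover have "incseq (\<lambda>n. {x \<in> pp \<omega> \<inter> cball 0 (real n). (\<omega>, x) \<in> S})"
      by (auto simp: incseq_def)
    ultimately show ?thesis
      by (simp add: SUP_emeasure_incseq)
  qed
  then show ?thesis
    by (simp only:) (intro borel_measurable_SUP borel_measurable_count_section_bounded[OF S]; simp)
qed

lemma borel_measurable_nn_integral_points:
  assumes "F \<in> borel_measurable (P \<Otimes>\<^sub>M borel)"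
  shows "(\<lambda>\<omega>. \<integral>\<^sup>+x. F (\<omega>, x) \<partial>count_space (pp \<omega>)) \<in> borel_measurable P"
  using assms
proof (induct rule: borel_measurable_induct)
  case (cong f g)
  have "(\<integral>\<^sup>+x. g (\<omega>, x) \<partial>count_space (pp \<omega>)) = (\<integral>\<^sup>+x. f (\<omega>, x) \<partial>count_space (pp \<omega>))"
    if "\<omega> \<in> space P" for \<omega>
    using cong(3) that by (intro nn_integral_cong) (simp add: space_pair_measure)
  with cong(4) show ?case by (rule measurable_cong[THEN iffD1, rotated])
next
  case (set A)
  have "(\<integral>\<^sup>+x. indicator A (\<omega>, x) \<partial>count_space (pp \<omega>))
      = emeasure (count_space UNIV) {x \<in> pp \<omega>. (\<omega>, x) \<in> A}" for \<omega>
  proof -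
    have "(\<integral>\<^sup>+x. indicator A (\<omega>, x) \<partial>count_space (pp \<omega>))
        = (\<integral>\<^sup>+x. indicator A (\<omega>, x) * indicator (pp \<omega>) x \<partial>count_space UNIV)"
      by (rule nn_integral_count_space_indicator) simp
    also have "\<dots> = (\<integral>\<^sup>+x. indicator {x \<in> pp \<omega>. (\<omega>, x) \<in> A} x \<partial>count_space UNIV)"
      by (intro nn_integral_cong) (auto simp: indicator_def)
    also have "\<dots> = emeasure (count_space UNIV) {x \<in> pp \<omega>. (\<omega>, x) \<in> A}"
      by (rule nn_integral_indicator) simp
    finally show ?thesis .
  qed
  then show ?case by (simp add: borel_measurable_count_section[OF set])
next
  case (mult u c)
  then show ?case by (simp add: nn_integral_cmult)
next
  case (add u v)
  then show ?case by (simp add: nn_integral_add)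
next
  case (seq U)
  have "(\<integral>\<^sup>+x. (SUP i. U i) (\<omega>, x) \<partial>count_space (pp \<omega>))
      = (SUP i. \<integral>\<^sup>+x. U i (\<omega>, x) \<partial>count_space (pp \<omega>))" for \<omega>
    using seq(4) unfolding SUP_apply
    by (intro nn_integral_monotone_convergence_SUP) (auto simp: incseq_def le_fun_def)
  then show ?case using seq(3) by simp
qed

definition point_count :: "'a set \<Rightarrow> 'w \<Rightarrow> ennreal" where
  "point_count A \<omega> = (\<integral>\<^sup>+x. indicator A x \<partial>count_space (pp \<omega>))"

lemma borel_measurable_point_count: "A \<in> sets borel \<Longrightarrow> point_count A \<in> borel_measurable P"
  unfolding point_count_def
  using borel_measurable_nn_integral_points[where F="\<lambda>p. indicator A (snd p)"] by simp

lemma point_count_mono: "A \<subseteq> B \<Longrightarrow> point_count A \<omega> \<le> point_count B \<omega>"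
  unfolding point_count_def by (intro nn_integral_mono) (auto simp: indicator_def)

lemma point_count_le_sum_cover:
  assumes "finite T" "A \<subseteq> (\<Union>t\<in>T. C t)"
  shows "point_count A \<omega> \<le> (\<Sum>t\<in>T. point_count (C t) \<omega>)"
proof -
  have "indicator A x \<le> (\<Sum>t\<in>T. indicator (C t) x :: ennreal)" for x
  proof (cases "x \<in> A")
    case True
    then obtain t where "t \<in> T" "x \<in> C t" using assms(2) by blast
    then show ?thesis
      using member_le_sum[of t T "\<lambda>t. indicator (C t) x :: ennreal"] assms(1) True by simp
  qed simp
  then show ?thesis
    unfolding point_count_def by (subst nn_integral_sum[symmetric]) (auto intro!: nn_integral_mono)
qed

lemma point_count_eq_card:
  assumes "\<omega> \<in> space P" "bounded A"
  shows "point_count A \<omega> = of_nat (card (pp \<omega> \<inter> A))"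
proof -
  have "point_count A \<omega> = (\<integral>\<^sup>+x. indicator A x * indicator (pp \<omega>) x \<partial>count_space UNIV)"
    unfolding point_count_def by (rule nn_integral_count_space_indicator) simp
  also have "\<dots> = (\<integral>\<^sup>+x. indicator (pp \<omega> \<inter> A) x \<partial>count_space UNIV)"
    by (intro nn_integral_cong) (auto simp: indicator_def)
  finally show ?thesis
    using finite_points_bounded[OF assms] by simp
qed

lemma borel_measurable_lam:
  assumes c_meas: "(\<lambda>(\<omega>, x, y). c \<omega> x y) \<in> borel_measurable (P \<Otimes>\<^sub>M borel \<Otimes>\<^sub>M borel)"
    and c_dt: "\<And>\<omega> x. \<not> dt_adj (pp \<omega>) 0 x \<Longrightarrow> c \<omega> 0 x = 0"
  shows "lam c pp k \<in> borel_measurable P"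
proof -
  have "lam c pp k = (\<lambda>\<omega>. \<integral>\<^sup>+x. ennreal (c \<omega> 0 x * norm x ^ k) \<partial>count_space (pp \<omega>))"
    unfolding lam_def
    by (intro ext, simp add: nn_integral_count_space_indicator)
       (auto intro!: nn_integral_cong simp: c_dt indicator_def)
  moreover have "(\<lambda>p. (fst p, 0::'a, snd p)) \<in> measurable (P \<Otimes>\<^sub>M borel) (P \<Otimes>\<^sub>M (borel \<Otimes>\<^sub>M borel))"
    by measurable
  note measurable_compose[OF this c_meas]
  ultimately show ?thesis
    using borel_measurable_nn_integral_points[where F="\<lambda>p. ennreal (c (fst p) 0 (snd p) * norm (snd p) ^ k)"]
    by simp
qed

end

lemma sets_palm[measurable_cong]: "sets (palm P \<theta> pp) = sets P"
  unfolding palm_def by (simp add: sets.sets_into_space)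

lemma space_palm: "space (palm P \<theta> pp) = space P"
  unfolding palm_def by (simp add: sets.sets_into_space)

locale palm_point_process = point_process P pp
  for P :: "'w measure" and pp :: "'w \<Rightarrow> 'a::euclidean_space set" +
  fixes \<theta> :: "'a \<Rightarrow> 'w \<Rightarrow> 'w"
  assumes action: "measurable_action P \<theta>"
begin

lemma measurable_shift_pair: "(\<lambda>p. \<theta> (snd p) (fst p)) \<in> measurable (P \<Otimes>\<^sub>M borel) P"
proof -
  have "(\<lambda>(x, \<omega>). \<theta> x \<omega>) \<in> measurable (borel \<Otimes>\<^sub>M P) P"
    using action unfolding measurable_action_def by blast
  from measurable_compose[OF measurable_pair_swap' this] show ?thesis
    by (simp add: split_beta')
qed

lemma measurable_shift: "\<theta> t \<in> measurable P P"
proof -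
  have "(\<lambda>\<omega>. (\<omega>, t)) \<in> measurable P (P \<Otimes>\<^sub>M borel)"
    by measurable
  from measurable_compose[OF this measurable_shift_pair] show ?thesis
    by simp
qed

lemma shift_in_space: "\<omega> \<in> space P \<Longrightarrow> \<theta> t \<omega> \<in> space P"
  using measurable_space[OF measurable_shift] .

definition cube_sum :: "('w \<Rightarrow> ennreal) \<Rightarrow> 'w \<Rightarrow> ennreal" where
  "cube_sum f \<omega> = (\<integral>\<^sup>+x. indicator (cbox 0 One) x * f (\<theta> x \<omega>) \<partial>count_space (pp \<omega>))"

lemma borel_measurable_cube_sum:
  assumes "f \<in> borel_measurable P"
  shows "cube_sum f \<in> borel_measurable P"
proof -
  have "(\<lambda>p. indicator (cbox 0 One) (snd p) * f (\<theta> (snd p) (fst p))) \<in> borel_measurable (P \<Otimes>\<^sub>M borel)"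
    using measurable_compose[OF measurable_shift_pair assms] by measurable
  from borel_measurable_nn_integral_points[OF this] show ?thesis
    unfolding cube_sum_def by simp
qed

lemma cube_sum_cmult: "cube_sum (\<lambda>\<omega>. c * f \<omega>) = (\<lambda>\<omega>. c * cube_sum f \<omega>)"
  unfolding cube_sum_def by (subst nn_integral_cmult[symmetric]) (simp_all add: ac_simps)

lemma cube_sum_add: "cube_sum (\<lambda>\<omega>. f \<omega> + g \<omega>) = (\<lambda>\<omega>. cube_sum f \<omega> + cube_sum g \<omega>)"
  unfolding cube_sum_def by (subst nn_integral_add[symmetric]) (simp_all add: distrib_left)

lemma cube_sum_mono: "(\<And>\<omega>. f \<omega> \<le> g \<omega>) \<Longrightarrow> cube_sum f \<omega> \<le> cube_sum g \<omega>"
  unfolding cube_sum_def by (intro nn_integral_mono mult_left_mono) simp_all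

lemma cube_sum_SUP:
  assumes "incseq U"
  shows "cube_sum (SUP i. U i) = (\<lambda>\<omega>. SUP i. cube_sum (U i) \<omega>)"
  unfolding cube_sum_def SUP_apply SUP_mult_left_ennreal using assms
  by (intro ext nn_integral_monotone_convergence_SUP)
     (auto simp: incseq_def le_fun_def intro!: mult_left_mono)

lemma cube_sum_indicator:
  assumes "\<omega> \<in> space P"
  shows "cube_sum (indicator A) \<omega> = of_nat (card {x \<in> pp \<omega> \<inter> cbox 0 One. \<theta> x \<omega> \<in> A})"
proof -
  have "cube_sum (indicator A) \<omega>
      = (\<integral>\<^sup>+x. indicator (cbox 0 One) x * indicator A (\<theta> x \<omega>) * indicator (pp \<omega>) x \<partial>count_space UNIV)"
    unfolding cube_sum_def by (rule nn_integral_count_space_indicator) simp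
  also have "\<dots> = (\<integral>\<^sup>+x. indicator {x \<in> pp \<omega> \<inter> cbox 0 One. \<theta> x \<omega> \<in> A} x \<partial>count_space UNIV)"
    by (intro nn_integral_cong) (auto simp: indicator_def)
  moreover have "finite {x \<in> pp \<omega> \<inter> cbox 0 One. \<theta> x \<omega> \<in> A}"
    using finite_points_bounded[OF assms, of "cbox 0 One"] by (rule finite_subset[rotated]) auto
  ultimately show ?thesis
    by simp
qed

lemma palm_eq_measure_of:
  "palm P \<theta> pp = measure_of (space P) (sets P)
     (\<lambda>A. (\<integral>\<^sup>+\<omega>. cube_sum (indicator A) \<omega> \<partial>P) / intensity P pp)"
  unfolding palm_def
  by (intro measure_of_eq sets.space_closed arg_cong2[where f="(/)"] nn_integral_cong)
     (simp_all add: cube_sum_indicator)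

lemma emeasure_palm:
  assumes "A \<in> sets P"
  shows "emeasure (palm P \<theta> pp) A = (\<integral>\<^sup>+\<omega>. cube_sum (indicator A) \<omega> \<partial>P) / intensity P pp"
  unfolding palm_eq_measure_of
proof (rule emeasure_measure_of_sigma[OF sets.sigma_algebra_axioms _ _ assms])
  show "positive (sets P) (\<lambda>A. (\<integral>\<^sup>+\<omega>. cube_sum (indicator A) \<omega> \<partial>P) / intensity P pp)"
    by (simp add: positive_def cube_sum_def)
  show "countably_additive (sets P) (\<lambda>A. (\<integral>\<^sup>+\<omega>. cube_sum (indicator A) \<omega> \<partial>P) / intensity P pp)"
  proof (rule countably_additiveI)
    fix A :: "nat \<Rightarrow> 'w set"
    assume A: "range A \<subseteq> sets P" "disjoint_family A"
    have "cube_sum (indicator (\<Union>i. A i)) \<omega> = (\<Sum>i. cube_sum (indicator (A i)) \<omega>)" for \<omega>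
      unfolding cube_sum_def suminf_indicator[OF A(2), symmetric]
      by (subst nn_integral_suminf[symmetric]) simp_all
    then have "(\<integral>\<^sup>+\<omega>. cube_sum (indicator (\<Union>i. A i)) \<omega> \<partial>P)
        = (\<Sum>i. \<integral>\<^sup>+\<omega>. cube_sum (indicator (A i)) \<omega> \<partial>P)"
      using A(1) by (simp, intro nn_integral_suminf borel_measurable_cube_sum) auto
    then show "(\<Sum>i. (\<integral>\<^sup>+\<omega>. cube_sum (indicator (A i)) \<omega> \<partial>P) / intensity P pp)
        = (\<integral>\<^sup>+\<omega>. cube_sum (indicator (\<Union>i. A i)) \<omega> \<partial>P) / intensity P pp"
      by simp
  qed
qed

lemma nn_integral_palm:
  assumes "f \<in> borel_measurable P"
  shows "(\<integral>\<^sup>+\<omega>. f \<omega> \<partial>palm P \<theta> pp) = (\<integral>\<^sup>+\<omega>. cube_sum f \<omega> \<partial>P) / intensity P pp"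
  using assms
proof (induct rule: borel_measurable_induct)
  case (cong f g)
  have "cube_sum f \<omega> = cube_sum g \<omega>" if "\<omega> \<in> space P" for \<omega>
    unfolding cube_sum_def using cong(3) that by (intro nn_integral_cong) (simp add: shift_in_space)
  then have "(\<integral>\<^sup>+\<omega>. cube_sum f \<omega> \<partial>P) = (\<integral>\<^sup>+\<omega>. cube_sum g \<omega> \<partial>P)"
    by (rule nn_integral_cong)
  moreover have "(\<integral>\<^sup>+\<omega>. f \<omega> \<partial>palm P \<theta> pp) = (\<integral>\<^sup>+\<omega>. g \<omega> \<partial>palm P \<theta> pp)"
    using cong(3) by (intro nn_integral_cong) (simp add: space_palm)
  ultimately show ?case
    using cong(4) by simp
next
  case (set A)
  then show ?case by (simp add: emeasure_palm)
next
  case (mult u c)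
  then show ?case
    by (simp add: cube_sum_cmult nn_integral_cmult borel_measurable_cube_sum ennreal_times_divide)
next
  case (add u v)
  then show ?case
    by (simp add: cube_sum_add nn_integral_add borel_measurable_cube_sum add_divide_distrib_ennreal)
next
  case (seq U)
  have palm_SUP: "(\<integral>\<^sup>+\<omega>. (SUP i. U i) \<omega> \<partial>palm P \<theta> pp) = (SUP i. \<integral>\<^sup>+\<omega>. U i \<omega> \<partial>palm P \<theta> pp)"
    unfolding SUP_apply using seq(1,4)
    by (intro nn_integral_monotone_convergence_SUP) (simp_all add: measurable_cong_sets[OF sets_palm])
  have "incseq (\<lambda>i. cube_sum (U i))"
    using seq(4) by (auto simp: incseq_def le_fun_def intro!: cube_sum_mono)
  then have P_SUP: "(\<integral>\<^sup>+\<omega>. (SUP i. cube_sum (U i) \<omega>) \<partial>P) = (SUP i. \<integral>\<^sup>+\<omega>. cube_sum (U i) \<omega> \<partial>P)"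
    using seq(1) by (intro nn_integral_monotone_convergence_SUP borel_measurable_cube_sum) auto
  show ?case
    by (simp only: palm_SUP cube_sum_SUP[OF seq(4)] P_SUP seq(3) SUP_divide_ennreal)
qed

end

lemma cball_subset_unit_cubes:
  fixes R :: real
  assumes R: "R \<ge> 0"
  obtains T where "finite T" "real (card T) \<le> (2 * R + 3) ^ DIM('a)"
    "cball (0::'a::euclidean_space) R \<subseteq> (\<Union>t\<in>T. cbox t (t + One))"
proof
  define M where "M = \<lceil>R\<rceil>"
  define K where "K = (Basis::'a set) \<rightarrow>\<^sub>E {-M..M}"
  define T where "T = (\<lambda>k. \<Sum>b\<in>Basis. of_int (k b) *\<^sub>R b) ` K"
  have "finite K" unfolding K_def by (intro finite_PiE) auto
  then show "finite T" unfolding T_def by simp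
  have "card T \<le> card K" unfolding T_def using \<open>finite K\<close> by (rule card_image_le)
  also have "card K = nat (2 * M + 1) ^ DIM('a)" unfolding K_def by (simp add: card_PiE)
  finally have "real (card T) \<le> real (nat (2 * M + 1)) ^ DIM('a)"
    by (metis of_nat_le_iff of_nat_power)
  also have "\<dots> \<le> (2 * R + 3) ^ DIM('a)"
    unfolding M_def using R by (intro power_mono) linarith+
  finally show "real (card T) \<le> (2 * R + 3) ^ DIM('a)" .
  show "cball 0 R \<subseteq> (\<Union>t\<in>T. cbox t (t + One))"
  proof
    fix x :: 'a assume x: "x \<in> cball 0 R"
    define k where "k = (\<lambda>b. if b \<in> Basis then \<lfloor>x \<bullet> b\<rfloor> else undefined)"
    have "k \<in> K" unfolding K_def k_def M_def
    proof (intro PiE_I)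
      fix b :: 'a assume b: "b \<in> Basis"
      have "\<bar>x \<bullet> b\<bar> \<le> R" using Basis_le_norm[OF b, of x] x by simp
      then show "(if b \<in> Basis then \<lfloor>x \<bullet> b\<rfloor> else undefined) \<in> {- \<lceil>R\<rceil>..\<lceil>R\<rceil>}"
        using b by (auto simp: abs_le_iff) linarith+
    qed auto
    define t where "t = (\<Sum>b\<in>Basis. of_int (k b) *\<^sub>R b)"
    have "t \<bullet> b = of_int \<lfloor>x \<bullet> b\<rfloor>" if "b \<in> Basis" for b
      unfolding t_def using that by (simp add: inner_sum_left inner_Basis k_def if_distrib cong: if_cong)
    then have "x \<in> cbox t (t + One)"
      unfolding mem_box by (auto simp: inner_add_left)
    moreover have "t \<in> T" unfolding T_def t_def using \<open>k \<in> K\<close> by blast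
    ultimately show "x \<in> (\<Union>t\<in>T. cbox t (t + One))" by blast
  qed
qed

lemma norm_le_DIM_unit_cube:
  assumes "y \<in> cbox (0::'a::euclidean_space) One"
  shows "norm y \<le> real DIM('a)"
proof -
  have "norm y \<le> (\<Sum>b\<in>Basis. \<bar>y \<bullet> b\<bar>)" by (rule norm_le_l1)
  also have "\<dots> \<le> (\<Sum>b\<in>(Basis::'a set). 1)"
    using assms by (intro sum_mono) (auto simp: mem_box)
  finally show ?thesis by simp
qed

lemma ennreal_mult_le_sq_add: "(a::ennreal) * b \<le> a\<^sup>2 + b\<^sup>2"
proof (cases "a \<le> b")
  case True
  then have "a * b \<le> b * b" by (intro mult_right_mono) auto
  then show ?thesis by (simp add: power2_eq_square add_increasing)
next
  case False
  then have "a * b \<le> a * a" by (intro mult_left_mono) auto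
  then show ?thesis by (simp add: power2_eq_square add_increasing2)
qed

lemma exists_dyadic_interval:
  fixes r :: real
  assumes "r \<ge> 1"
  obtains j :: nat where "2 ^ j \<le> r" "r \<le> 2 ^ Suc j"
proof
  define j where "j = nat \<lfloor>log 2 r\<rfloor>"
  have j: "real j = \<lfloor>log 2 r\<rfloor>" unfolding j_def using assms by simp
  have "2 powr \<lfloor>log 2 r\<rfloor> \<le> r \<and> r < 2 powr (\<lfloor>log 2 r\<rfloor> + 1)"
    using floor_log_eq_powr_iff[of r 2 "\<lfloor>log 2 r\<rfloor>"] assms by simp
  then show "2 ^ j \<le> r" "r \<le> 2 ^ Suc j"
    by (simp_all flip: j add: powr_realpow[symmetric] powr_add)
qed

lemma powr_decay_times_square_le_dyadic:
  fixes r d \<epsilon> :: real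
  assumes "2 ^ j \<le> r" "d + \<epsilon> \<ge> 0" "k \<le> 2"
  shows "r powr (- (d + 2 + \<epsilon>)) * r ^ k \<le> (2 powr (- (d + \<epsilon>))) ^ j"
proof -
  have "(1::real) \<le> 2 ^ j" by simp
  then have r: "r \<ge> 1" using assms(1) by linarith
  have "r powr (- (d + 2 + \<epsilon>)) * r ^ k \<le> r powr (- (d + 2 + \<epsilon>)) * r powr 2"
    using r assms(3) by (intro mult_left_mono) (auto simp: powr_realpow power_increasing)
  also have "\<dots> = r powr (- (d + \<epsilon>))"
    by (simp add: powr_add[symmetric])
  also have "\<dots> \<le> (2 ^ j) powr (- (d + \<epsilon>))"
    using assms by (intro powr_mono2') auto
  also have "\<dots> = (2 powr (- (d + \<epsilon>))) ^ j"
    by (simp add: powr_realpow[symmetric] powr_powr mult.commute)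
  finally show ?thesis .
qed

lemma kernel_le_dyadic_sum:
  fixes \<phi> :: "real \<Rightarrow> real" and x :: "'a::real_normed_vector" and d \<epsilon> B C0 :: real
  assumes nonneg: "\<phi> (norm x) \<ge> 0"
    and bounded: "\<And>r. r \<in> {0..1} \<Longrightarrow> \<phi> r \<le> B"
    and decay: "\<And>r. r \<ge> 1 \<Longrightarrow> \<phi> r \<le> C0 * r powr (- (d + 2 + \<epsilon>))"
    and C0: "C0 > 0" and "d + \<epsilon> \<ge> 0" "k \<le> 2"
  shows "ennreal (\<phi> (norm x) * norm x ^ k)
    \<le> (\<Sum>j. ennreal ((max B 0 + C0) * (2 powr (- (d + \<epsilon>))) ^ j) * indicator (cball 0 (2 ^ Suc j)) x)"
proof -
  let ?a = "\<lambda>j. (max B 0 + C0) * (2 powr (- (d + \<epsilon>))) ^ j"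
  have "\<exists>j. \<phi> (norm x) * norm x ^ k \<le> ?a j \<and> norm x \<le> 2 ^ Suc j"
  proof (cases "norm x \<le> 1")
    case True
    then have "\<phi> (norm x) * norm x ^ k \<le> B * 1"
      using bounded[of "norm x"] nonneg by (intro mult_mono power_le_one) auto
    then show ?thesis
      using True C0 by (intro exI[of _ 0]) auto
  next
    case False
    then obtain j where j: "2 ^ j \<le> norm x" "norm x \<le> 2 ^ Suc j"
      using exists_dyadic_interval[of "norm x"] by auto
    have "\<phi> (norm x) * norm x ^ k \<le> C0 * norm x powr (- (d + 2 + \<epsilon>)) * norm x ^ k"
      using decay[of "norm x"] False by (intro mult_right_mono) auto
    also have "\<dots> \<le> C0 * (2 powr (- (d + \<epsilon>))) ^ j"
      unfolding mult.assoc using C0 j assms by (intro mult_left_mono powr_decay_times_square_le_dyadic) auto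
    also have "\<dots> \<le> ?a j"
      by (intro mult_right_mono) auto
    finally show ?thesis
      using j by blast
  qed
  then obtain j where "\<phi> (norm x) * norm x ^ k \<le> ?a j" "norm x \<le> 2 ^ Suc j"
    by blast
  then have "ennreal (\<phi> (norm x) * norm x ^ k) \<le> ennreal (?a j) * indicator (cball 0 (2 ^ Suc j)) x"
    by (simp add: ennreal_leI)
  also have "\<dots> \<le> (\<Sum>j. ennreal (?a j) * indicator (cball 0 (2 ^ Suc j)) x)"
    by (meson ennreal_suminf_lessD not_le less_irrefl)
  finally show ?thesis .
qed

lemma summable_dyadic_ball_weights:
  fixes \<epsilon> A :: real and n :: nat
  assumes \<epsilon>: "\<epsilon> > 0" and A: "A \<ge> 0"
  shows "summable (\<lambda>j. A * (2 powr (- (real n + \<epsilon>))) ^ j * (2 * (2 * (2 ^ Suc j + real n) + 3) ^ n))"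
proof (rule summable_comparison_test')
  define q where "q = 2 powr (- (real n + \<epsilon>))"
  have "q * 2 ^ n = 2 powr (- \<epsilon>)"
    unfolding q_def by (simp add: powr_realpow[symmetric] powr_add[symmetric])
  also have "\<dots> < 1"
    using \<epsilon> by (simp add: powr_less_one)
  finally show "summable (\<lambda>j. (2 * A * (2 * real n + 7) ^ n) * (q * 2 ^ n) ^ j)"
    using q_def by (intro summable_mult summable_geometric) simp
  fix j :: nat
  have "2 * (2 ^ Suc j + real n) + 3 \<le> 2 ^ j * (2 * real n + 7)"
    using mult_right_mono[OF one_le_power[of "2::real" j], of "2 * real n + 3"] by (simp add: algebra_simps)
  then have "(2 * (2 ^ Suc j + real n) + 3) ^ n \<le> (2 ^ j * (2 * real n + 7)) ^ n"
    by (intro power_mono) auto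
  also have "\<dots> = (2 ^ n) ^ j * (2 * real n + 7) ^ n"
    by (simp add: power_mult_distrib power_mult[symmetric] mult.commute)
  finally have "(2 * (2 ^ Suc j + real n) + 3) ^ n \<le> (2 ^ n) ^ j * (2 * real n + 7) ^ n" .
  then show "norm (A * q ^ j * (2 * (2 * (2 ^ Suc j + real n) + 3) ^ n))
      \<le> (2 * A * (2 * real n + 7) ^ n) * (q * 2 ^ n) ^ j"
    using A by (simp add: q_def power_mult_distrib mult_left_mono algebra_simps)
qed

locale stationary_point_process = palm_point_process P pp \<theta>
  for P :: "'w measure" and pp :: "'w \<Rightarrow> 'a::euclidean_space set" and \<theta> +
  fixes \<Omega>s :: "'w set"
  assumes shift_invariant: "\<And>x. distr P P (\<theta> x) = P"
    and \<Omega>s_sets: "\<Omega>s \<in> sets P" and \<Omega>s_null: "emeasure P (space P - \<Omega>s) = 0"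
    and points_shift: "\<And>\<omega> x. \<omega> \<in> \<Omega>s \<Longrightarrow> pp (\<theta> x \<omega>) = (\<lambda>y. y - x) ` pp \<omega>"
begin

lemma AE_in_\<Omega>s: "AE \<omega> in P. \<omega> \<in> \<Omega>s"
  by (rule AE_I'[of "space P - \<Omega>s"]) (use \<Omega>s_sets \<Omega>s_null in auto)

lemma point_count_shift:
  assumes "\<omega> \<in> \<Omega>s"
  shows "point_count A (\<theta> t \<omega>) = point_count ((+) t ` A) \<omega>"
proof -
  have "point_count A (\<theta> t \<omega>) = (\<integral>\<^sup>+y. indicator A (y - t) \<partial>count_space (pp \<omega>))"
    unfolding point_count_def points_shift[OF assms]
    by (rule nn_integral_bij_count_space[symmetric]) (auto simp: bij_betw_def inj_on_def)
  also have "\<dots> = point_count ((+) t ` A) \<omega>"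
    unfolding point_count_def
    by (intro nn_integral_cong) (auto simp: indicator_def image_iff algebra_simps)
  finally show ?thesis .
qed

lemma second_moment_unit_cube:
  "(\<integral>\<^sup>+\<omega>. (point_count (cbox t (t + One)) \<omega>)\<^sup>2 \<partial>P) = second_moment P pp"
proof -
  have "second_moment P pp = (\<integral>\<^sup>+\<omega>. (point_count (cbox 0 One) \<omega>)\<^sup>2 \<partial>P)"
    unfolding second_moment_def by (intro nn_integral_cong) (simp add: point_count_eq_card)
  also have "\<dots> = (\<integral>\<^sup>+\<omega>. (point_count (cbox 0 One) \<omega>)\<^sup>2 \<partial>distr P P (\<theta> t))"
    by (simp add: shift_invariant)
  also have "\<dots> = (\<integral>\<^sup>+\<omega>. (point_count (cbox 0 One) (\<theta> t \<omega>))\<^sup>2 \<partial>P)"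
    by (intro nn_integral_distr measurable_shift borel_measurable_power_ennreal)
       (simp add: borel_measurable_point_count)
  also have "\<dots> = (\<integral>\<^sup>+\<omega>. (point_count (cbox t (t + One)) \<omega>)\<^sup>2 \<partial>P)"
  proof -
    have "(+) t ` cbox 0 One = cbox t (t + One)"
      using cbox_translation[of t 0 One] by simp
    then show ?thesis
      using AE_in_\<Omega>s by (intro nn_integral_cong_AE) (auto elim!: AE_mp simp: point_count_shift)
  qed
  finally show ?thesis ..
qed

text \<open>Cover the ball by unit cubes \<open>Q\<^sub>t\<close> and use \<open>ab \<le> a\<^sup>2 + b\<^sup>2\<close> with stationarity:
  every \<open>E[N(Q\<^sub>t)\<^sup>2]\<close> equals the second moment.\<close>
lemma nn_integral_count_cube_times_count_ball_le:
  assumes R: "R \<ge> 0"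
  shows "(\<integral>\<^sup>+\<omega>. point_count (cbox 0 One) \<omega> * point_count (cball 0 R) \<omega> \<partial>P)
     \<le> ennreal (2 * (2 * R + 3) ^ DIM('a)) * second_moment P pp"
proof -
  obtain T where T: "finite T" "real (card T) \<le> (2 * R + 3) ^ DIM('a)"
    "cball (0::'a) R \<subseteq> (\<Union>t\<in>T. cbox t (t + One))"
    using cball_subset_unit_cubes[OF R] by blast
  let ?N = "\<lambda>t. point_count (cbox t (t + One))"
  have "point_count (cball 0 R) \<omega> \<le> (\<Sum>t\<in>T. ?N t \<omega>)" for \<omega>
    using T(1,3) by (rule point_count_le_sum_cover)
  then have "point_count (cbox 0 One) \<omega> * point_count (cball 0 R) \<omega>
      \<le> (\<Sum>t\<in>T. point_count (cbox 0 One) \<omega> * ?N t \<omega>)" for \<omega>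
    unfolding sum_distrib_left[symmetric] by (rule mult_left_mono) simp_all
  also have "(\<Sum>t\<in>T. point_count (cbox 0 One) \<omega> * ?N t \<omega>)
      \<le> (\<Sum>t\<in>T. (point_count (cbox 0 One) \<omega>)\<^sup>2 + (?N t \<omega>)\<^sup>2)" for \<omega>
    by (intro sum_mono ennreal_mult_le_sq_add)
  finally have "point_count (cbox 0 One) \<omega> * point_count (cball 0 R) \<omega>
      \<le> (\<Sum>t\<in>T. (point_count (cbox 0 One) \<omega>)\<^sup>2 + (?N t \<omega>)\<^sup>2)" for \<omega> .
  then have "(\<integral>\<^sup>+\<omega>. point_count (cbox 0 One) \<omega> * point_count (cball 0 R) \<omega> \<partial>P)
      \<le> (\<integral>\<^sup>+\<omega>. (\<Sum>t\<in>T. (point_count (cbox 0 One) \<omega>)\<^sup>2 + (?N t \<omega>)\<^sup>2) \<partial>P)"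
    by (intro nn_integral_mono)
  also have "\<dots> = (\<Sum>t\<in>T. (\<integral>\<^sup>+\<omega>. (?N 0 \<omega>)\<^sup>2 \<partial>P) + (\<integral>\<^sup>+\<omega>. (?N t \<omega>)\<^sup>2 \<partial>P))"
    by (subst nn_integral_sum) (auto intro!: sum.cong nn_integral_add borel_measurable_add
        borel_measurable_power_ennreal borel_measurable_point_count)
  also have "\<dots> = of_nat (card T) * (2 * second_moment P pp)"
    by (simp only: second_moment_unit_cube mult_2 sum_constant)
  also have "\<dots> \<le> ennreal ((2 * R + 3) ^ DIM('a)) * (2 * second_moment P pp)"
    using T(2) by (intro mult_right_mono) (simp_all add: ennreal_of_nat_eq_real_of_nat ennreal_leI)
  also have "\<dots> = ennreal (2 * (2 * R + 3) ^ DIM('a)) * second_moment P pp"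
    using R by (simp add: ennreal_mult mult_ac)
  finally show ?thesis .
qed

lemma nn_integral_palm_count_ball_le:
  assumes R: "R \<ge> 0"
  shows "(\<integral>\<^sup>+\<omega>. point_count (cball 0 R) \<omega> \<partial>palm P \<theta> pp)
     \<le> ennreal (2 * (2 * (R + DIM('a)) + 3) ^ DIM('a)) * second_moment P pp / intensity P pp"
proof -
  have "cube_sum (point_count (cball 0 R)) \<omega>
      \<le> point_count (cbox 0 One) \<omega> * point_count (cball 0 (R + DIM('a))) \<omega>" if \<omega>: "\<omega> \<in> \<Omega>s" for \<omega>
  proof -
    have "point_count (cball 0 R) (\<theta> y \<omega>) \<le> point_count (cball 0 (R + DIM('a))) \<omega>"
      if y: "y \<in> cbox 0 One" for y
    proof -
      have "cball y R \<subseteq> cball 0 (R + DIM('a))"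
      proof
        fix x assume "x \<in> cball y R"
        then show "x \<in> cball 0 (R + DIM('a))"
          using norm_triangle_sub[of x y] norm_le_DIM_unit_cube[OF y]
          by (simp add: dist_norm norm_minus_commute)
      qed
      then show ?thesis
        by (simp add: point_count_shift[OF \<omega>] point_count_mono)
    qed
    then have "cube_sum (point_count (cball 0 R)) \<omega>
        \<le> (\<integral>\<^sup>+y. indicator (cbox 0 One) y * point_count (cball 0 (R + DIM('a))) \<omega> \<partial>count_space (pp \<omega>))"
      unfolding cube_sum_def by (intro nn_integral_mono) (simp add: indicator_def)
    also have "\<dots> = point_count (cbox 0 One) \<omega> * point_count (cball 0 (R + DIM('a))) \<omega>"
      unfolding point_count_def by (rule nn_integral_multc) simp
    finally show ?thesis .
  qed
  then have "(\<integral>\<^sup>+\<omega>. cube_sum (point_count (cball 0 R)) \<omega> \<partial>P)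
      \<le> (\<integral>\<^sup>+\<omega>. point_count (cbox 0 One) \<omega> * point_count (cball 0 (R + DIM('a))) \<omega> \<partial>P)"
    using AE_in_\<Omega>s by (intro nn_integral_mono_AE) (auto elim!: AE_mp)
  also have "\<dots> \<le> ennreal (2 * (2 * (R + DIM('a)) + 3) ^ DIM('a)) * second_moment P pp"
    using R by (intro nn_integral_count_cube_times_count_ball_le) simp
  finally show ?thesis
    by (simp add: nn_integral_palm borel_measurable_point_count divide_right_mono_ennreal)
qed

lemma nn_integral_palm_radial_sum_le:
  assumes a: "\<And>j. a j \<ge> 0" and r: "\<And>j. r j \<ge> 0"
  shows "(\<integral>\<^sup>+\<omega>. \<integral>\<^sup>+x. (\<Sum>j. ennreal (a j) * indicator (cball 0 (r j)) x) \<partial>count_space (pp \<omega>) \<partial>palm P \<theta> pp)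
     \<le> (\<Sum>j. ennreal (a j * (2 * (2 * (r j + DIM('a)) + 3) ^ DIM('a))))
         * second_moment P pp / intensity P pp"
proof -
  have "(\<integral>\<^sup>+x. (\<Sum>j. ennreal (a j) * indicator (cball 0 (r j)) x) \<partial>count_space (pp \<omega>))
      = (\<Sum>j. ennreal (a j) * point_count (cball 0 (r j)) \<omega>)" for \<omega>
    unfolding point_count_def by (simp add: nn_integral_suminf nn_integral_cmult)
  then have "(\<integral>\<^sup>+\<omega>. \<integral>\<^sup>+x. (\<Sum>j. ennreal (a j) * indicator (cball 0 (r j)) x) \<partial>count_space (pp \<omega>) \<partial>palm P \<theta> pp)
      = (\<integral>\<^sup>+\<omega>. (\<Sum>j. ennreal (a j) * point_count (cball 0 (r j)) \<omega>) \<partial>palm P \<theta> pp)"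
    by (simp only:)
  also have "\<dots> = (\<Sum>j. \<integral>\<^sup>+\<omega>. ennreal (a j) * point_count (cball 0 (r j)) \<omega> \<partial>palm P \<theta> pp)"
    by (rule nn_integral_suminf) (simp add: measurable_cong_sets[OF sets_palm]
        borel_measurable_times_ennreal borel_measurable_point_count)
  also have "\<dots> = (\<Sum>j. ennreal (a j) * (\<integral>\<^sup>+\<omega>. point_count (cball 0 (r j)) \<omega> \<partial>palm P \<theta> pp))"
    by (simp add: nn_integral_cmult borel_measurable_point_count measurable_cong_sets[OF sets_palm])
  also have "\<dots> \<le> (\<Sum>j. ennreal (a j) * (ennreal (2 * (2 * (r j + DIM('a)) + 3) ^ DIM('a))
      * second_moment P pp / intensity P pp))"
    using r by (intro suminf_le summableI mult_left_mono nn_integral_palm_count_ball_le) auto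
  also have "\<dots> = (\<Sum>j. ennreal (a j * (2 * (2 * (r j + DIM('a)) + 3) ^ DIM('a))))
      * second_moment P pp / intensity P pp"
    using a r by (simp add: ennreal_mult ennreal_times_divide flip: mult.assoc)
  finally show ?thesis .
qed

lemma nn_integral_palm_kernel_finite:
  fixes \<phi> :: "real \<Rightarrow> real" and B C0 \<epsilon> :: real
  assumes \<phi>_nonneg: "\<And>r. r \<ge> 0 \<Longrightarrow> \<phi> r \<ge> 0"
    and \<phi>_bounded: "\<And>r. r \<in> {0..1} \<Longrightarrow> \<phi> r \<le> B"
    and \<phi>_decay: "\<And>r. r \<ge> 1 \<Longrightarrow> \<phi> r \<le> C0 * r powr (- (real DIM('a) + 2 + \<epsilon>))"
    and C0: "C0 > 0" and \<epsilon>: "\<epsilon> > 0" and k: "k \<le> 2"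
    and second_moment_finite: "second_moment P pp < \<infinity>"
    and intensity_pos: "0 < intensity P pp"
  shows "(\<integral>\<^sup>+\<omega>. \<integral>\<^sup>+x. ennreal (\<phi> (norm x) * norm x ^ k) \<partial>count_space (pp \<omega>) \<partial>palm P \<theta> pp) < \<infinity>"
proof -
  define a where "a j = (max B 0 + C0) * (2 powr (- (real DIM('a) + \<epsilon>))) ^ j" for j
  have a_nonneg: "a j \<ge> 0" for j
    unfolding a_def using C0 by simp
  have "(\<integral>\<^sup>+\<omega>. \<integral>\<^sup>+x. ennreal (\<phi> (norm x) * norm x ^ k) \<partial>count_space (pp \<omega>) \<partial>palm P \<theta> pp)
      \<le> (\<integral>\<^sup>+\<omega>. \<integral>\<^sup>+x. (\<Sum>j. ennreal (a j) * indicator (cball 0 (2 ^ Suc j)) x)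
        \<partial>count_space (pp \<omega>) \<partial>palm P \<theta> pp)"
    unfolding a_def using assms by (intro nn_integral_mono kernel_le_dyadic_sum) auto
  also have "\<dots> \<le> (\<Sum>j. ennreal (a j * (2 * (2 * (2 ^ Suc j + real DIM('a)) + 3) ^ DIM('a))))
      * second_moment P pp / intensity P pp"
    using a_nonneg by (rule nn_integral_palm_radial_sum_le) simp
  also have "\<dots> < \<infinity>"
  proof -
    have "summable (\<lambda>j. a j * (2 * (2 * (2 ^ Suc j + real DIM('a)) + 3) ^ DIM('a)))"
      unfolding a_def using C0 by (intro summable_dyadic_ball_weights[OF \<epsilon>]) simp
    then have "(\<Sum>j. ennreal (a j * (2 * (2 * (2 ^ Suc j + real DIM('a)) + 3) ^ DIM('a)))) < \<infinity>"
      using a_nonneg by (simp add: ennreal_suminf_neq_top less_top[symmetric])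
    then show ?thesis
      using second_moment_finite intensity_pos
      by (auto simp: ennreal_divide_eq_top_iff ennreal_mult_eq_top_iff less_top[symmetric])
  qed
  finally show ?thesis .
qed

end

lemma nn_integral_lam_le_kernel:
  assumes g: "cond_exp_neighbours Q pp c g"
    and g_le: "AE \<omega> in Q. \<forall>x \<in> pp \<omega>. dt_adj (pp \<omega>) 0 x \<longrightarrow> g (pp \<omega>, x) \<le> ennreal (\<phi> (norm x))"
    and c_nonneg: "\<And>\<omega> x. c \<omega> 0 x \<ge> 0"
    and \<phi>_nonneg: "\<And>r. r \<ge> 0 \<Longrightarrow> \<phi> r \<ge> 0"
  shows "(\<integral>\<^sup>+\<omega>. lam c pp k \<omega> \<partial>Q)
    \<le> (\<integral>\<^sup>+\<omega>. \<integral>\<^sup>+x. ennreal (\<phi> (norm x) * norm x ^ k) \<partial>count_space (pp \<omega>) \<partial>Q)"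
proof -
  let ?N = "\<lambda>\<omega>. count_space {x \<in> pp \<omega>. dt_adj (pp \<omega>) 0 x}"
  have "(\<integral>\<^sup>+\<omega>. lam c pp k \<omega> \<partial>Q)
      = (\<integral>\<^sup>+\<omega>. \<integral>\<^sup>+x. ennreal (c \<omega> 0 x) * ennreal (norm x ^ k) \<partial>?N \<omega> \<partial>Q)"
    unfolding lam_def by (simp add: ennreal_mult c_nonneg)
  also have "\<dots> = (\<integral>\<^sup>+\<omega>. \<integral>\<^sup>+x. g (pp \<omega>, x) * ennreal (norm x ^ k) \<partial>?N \<omega> \<partial>Q)"
  proof -
    have "(\<lambda>p. ennreal (norm (snd p) ^ k)) \<in> borel_measurable (Nspace \<Otimes>\<^sub>M borel)"
      by measurable
    with g show ?thesis
      unfolding cond_exp_neighbours_def by fastforce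
  qed
  also have "\<dots> \<le> (\<integral>\<^sup>+\<omega>. \<integral>\<^sup>+x. ennreal (\<phi> (norm x) * norm x ^ k) \<partial>?N \<omega> \<partial>Q)"
    using g_le
    by (intro nn_integral_mono_AE)
       (auto elim!: AE_mp intro!: nn_integral_mono mult_right_mono simp: ennreal_mult \<phi>_nonneg)
  also have "\<dots> \<le> (\<integral>\<^sup>+\<omega>. \<integral>\<^sup>+x. ennreal (\<phi> (norm x) * norm x ^ k) \<partial>count_space (pp \<omega>) \<partial>Q)"
    by (intro nn_integral_mono)
       (simp add: nn_integral_count_space_indicator nn_integral_mono indicator_def)
  finally show ?thesis .
qed

theorem proposition4p11:
  fixes P :: "'w measure"
    and \<theta> :: "'a::euclidean_space \<Rightarrow> 'w \<Rightarrow> 'w"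
    and pp :: "'w \<Rightarrow> 'a set"
    and c :: "'w \<Rightarrow> 'a \<Rightarrow> 'a \<Rightarrow> real"
    and \<phi> :: "real \<Rightarrow> real"
    and C0 \<epsilon> :: real
  assumes prob: "prob_space P"
    and action: "measurable_action P \<theta>"
    and pp_meas: "pp \<in> measurable P Nspace"
    and c_meas: "(\<lambda>(\<omega>, x, y). c \<omega> x y) \<in> borel_measurable (P \<Otimes>\<^sub>M borel \<Otimes>\<^sub>M borel)"
    and c_nonneg: "\<And>\<omega> x y. c \<omega> x y \<ge> 0"
    and c_sym: "\<And>\<omega> x y. c \<omega> x y = c \<omega> y x"
    and c_diag: "\<And>\<omega> x. c \<omega> x x = 0"
    and c_dt: "\<And>\<omega> x y. \<not> dt_adj (pp \<omega>) x y \<Longrightarrow> c \<omega> x y = 0"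
    and A1_inv: "\<And>x. distr P P (\<theta> x) = P"
    and A1_nonempty: "emeasure P {\<omega> \<in> space P. pp \<omega> = {}} = 0"
    and A2: "0 < intensity P pp" "intensity P pp < \<infinity>"
    and A3: "\<exists>\<Omega>s \<in> sets P. emeasure P (space P - \<Omega>s) = 0 \<and>
               (\<forall>x. \<forall>\<omega>\<in>\<Omega>s. \<theta> x \<omega> \<in> \<Omega>s) \<and>
               (\<forall>\<omega>\<in>\<Omega>s. \<forall>x. pp (\<theta> x \<omega>) = (\<lambda>y. y - x) ` pp \<omega> \<and>
                   (\<forall>y z. dt_adj (pp \<omega>) y z \<longrightarrow> c (\<theta> x \<omega>) (y - x) (z - x) = c \<omega> y z))"
    and phi_meas: "\<phi> \<in> borel_measurable borel"
    and phi_nonneg: "\<And>r. r \<ge> 0 \<Longrightarrow> \<phi> r \<ge> 0"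
    and phi_locbdd: "\<And>R. \<exists>B. \<forall>r\<in>{0..R}. \<phi> r \<le> B"
    and C0_pos: "C0 > 0" and eps_pos: "\<epsilon> > 0"
    and phi_decay: "\<And>r. r \<ge> 1 \<Longrightarrow> \<phi> r \<le> C0 * r powr (- (real DIM('a) + 2 + \<epsilon>))"
    and cond: "\<exists>g. cond_exp_neighbours (palm P \<theta> pp) pp c g \<and>
                 (AE \<omega> in palm P \<theta> pp. \<forall>x \<in> pp \<omega>. dt_adj (pp \<omega>) 0 x \<longrightarrow>
                     g (pp \<omega>, x) \<le> ennreal (\<phi> (norm x)))"
    and rho2: "second_moment P pp < \<infinity>"
  shows "lam c pp 0 \<in> borel_measurable (palm P \<theta> pp) \<and>
           (\<integral>\<^sup>+ \<omega>. lam c pp 0 \<omega> \<partial>palm P \<theta> pp) < \<infinity> \<and>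
         lam c pp 2 \<in> borel_measurable (palm P \<theta> pp) \<and>
           (\<integral>\<^sup>+ \<omega>. lam c pp 2 \<omega> \<partial>palm P \<theta> pp) < \<infinity>"
proof -
  obtain \<Omega>s where \<Omega>s: "\<Omega>s \<in> sets P" "emeasure P (space P - \<Omega>s) = 0"
    "\<forall>\<omega>\<in>\<Omega>s. \<forall>x. pp (\<theta> x \<omega>) = (\<lambda>y. y - x) ` pp \<omega>"
    using A3 by auto
  interpret stationary_point_process P pp \<theta> \<Omega>s
    by unfold_locales (use action pp_meas A1_inv \<Omega>s in auto)
  obtain g where g: "cond_exp_neighbours (palm P \<theta> pp) pp c g"
    and g_le: "AE \<omega> in palm P \<theta> pp. \<forall>x \<in> pp \<omega>. dt_adj (pp \<omega>) 0 x \<longrightarrow> g (pp \<omega>, x) \<le> ennreal (\<phi> (norm x))"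
    using cond by blast
  obtain B where B: "\<forall>r\<in>{0..1}. \<phi> r \<le> B"
    using phi_locbdd by blast
  have "(\<integral>\<^sup>+\<omega>. lam c pp k \<omega> \<partial>palm P \<theta> pp) < \<infinity>" if "k \<le> 2" for k
    using nn_integral_lam_le_kernel[OF g g_le c_nonneg phi_nonneg]
      nn_integral_palm_kernel_finite[OF phi_nonneg _ phi_decay C0_pos eps_pos that rho2 A2(1)] B
    by (meson le_less_trans)
  then show ?thesis
    using borel_measurable_lam[OF c_meas c_dt] by (simp add: measurable_cong_sets[OF sets_palm])
qed

end
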